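(* Consider a prepare-and-measure QKD protocol in which Alice prepares states $\{\rho_i^\mu\}\subset\mathcal{S}(A'')$ with probabilities $p(i,\mu)$, recording $(i,\mu)$ in a classical register $A$, and a virtual protocol identical to it except that the prepared states are $\{\xi_i^\mu\}\subset\mathcal{S}(A')$. Suppose there exists a quantum channel $\Psi$ from $A'$ to $A''$ (a source map) with $\rho_i^\mu=\Psi[\xi_i^\mu]$ for all $i,\mu$. Then $\varepsilon_{\mathrm{sec}}$-secrecy of the virtual protocol implies $\varepsilon_{\mathrm{sec}}$-secrecy of the real protocol.
   Context: $\mathcal{S}(H)$ denotes the density operators on $H$. A prepare-and-measure protocol with per-round prepared state $\rho^{\mathrm{prep}}_{AX}=\sum_{i,\mu}p(i,\mu)|i,\mu\rangle\langle i,\mu|_A\otimes\rho_i^\mu$ (Alice keeps $A$, sends $X$) and protocol map $\mathcal{E}^{(l)}$, ideal map $\mathcal{E}^{(l),\mathrm{ideal}}$ acting on $A^nB^n$ (the same maps for the real and virtual protocols), is $\varepsilon_{\mathrm{sec}}$-secret if $\tfrac12\|((\mathcal{E}^{(l)}-\mathcal{E}^{(l),\mathrm{ideal}})\otimes\mathrm{id}_{E^n})[(\mathrm{id}_{A^n}\otimes\Phi)(\rho^{\mathrm{prep}\,\otimes n}_{AX})]\|_1\leq\varepsilon_{\mathrm{sec}}$ for all channels $\Phi$ from $X^n$ to $B^nE^n$; $X=A''$ for the real and $X=A'$ for the virtual protocol. The ideal map replaces the key on acceptance by a uniformly random key of the same length independent of other outputs. *)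

theory Defs
  imports "Jordan_Normal_Form.Matrix"
begin

text \<open>Tensor products use the Kronecker
  convention: the index of A \<otimes> B is iA * dim B + iB (first factor most significant).\<close>

definition mtrace :: "complex mat \<Rightarrow> complex" where
  "mtrace M = (\<Sum>i<dim_row M. M $$ (i, i))"

definition dagger :: "complex mat \<Rightarrow> complex mat" where
  "dagger M = mat (dim_col M) (dim_row M) (\<lambda>(i, j). cnj (M $$ (j, i)))"

definition psd :: "complex mat \<Rightarrow> bool" where
  "psd M \<longleftrightarrow> dim_row M = dim_col M \<and>
     (\<forall>v \<in> carrier_vec (dim_row M).
        let z = (\<Sum>i<dim_row M. cnj (v $ i) * (M *\<^sub>v v) $ i) in Im z = 0 \<and> 0 \<le> Re z)"

definition density :: "nat \<Rightarrow> complex mat \<Rightarrow> bool" where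
  "density d \<rho> \<longleftrightarrow> \<rho> \<in> carrier_mat d d \<and> psd \<rho> \<and> mtrace \<rho> = 1"

definition psd_sqrt :: "complex mat \<Rightarrow> complex mat" where
  "psd_sqrt A = (THE S. S \<in> carrier_mat (dim_row A) (dim_row A) \<and> psd S \<and> S * S = A)"

definition trace_norm :: "complex mat \<Rightarrow> real" where
  "trace_norm M = Re (mtrace (psd_sqrt (dagger M * M)))"

definition kron :: "complex mat \<Rightarrow> complex mat \<Rightarrow> complex mat" where
  "kron A B = mat (dim_row A * dim_row B) (dim_col A * dim_col B)
     (\<lambda>(i, j). A $$ (i div dim_row B, j div dim_col B) * B $$ (i mod dim_row B, j mod dim_col B))"

fun kron_pow :: "nat \<Rightarrow> complex mat \<Rightarrow> complex mat" where
  "kron_pow 0 M = 1\<^sub>m 1"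
| "kron_pow (Suc n) M = kron M (kron_pow n M)"

text \<open>(id_k \<otimes> \<Phi>)(M) for M on C^k \<otimes> C^d1 and \<Phi> mapping d1\<times>d1 to d2\<times>d2 matrices
  (applied blockwise; this is id \<otimes> \<Phi> for linear \<Phi>).\<close>
definition id_tensor :: "nat \<Rightarrow> nat \<Rightarrow> nat \<Rightarrow> (complex mat \<Rightarrow> complex mat) \<Rightarrow> complex mat \<Rightarrow> complex mat" where
  "id_tensor k d1 d2 \<Phi> M = mat (k * d2) (k * d2)
     (\<lambda>(r, c). \<Phi> (mat d1 d1 (\<lambda>(x, y). M $$ ((r div d2) * d1 + x, (c div d2) * d1 + y)))
                 $$ (r mod d2, c mod d2))"

text \<open>(\<E> \<otimes> id_m)(M) for M on C^d1 \<otimes> C^m and \<E> mapping d1\<times>d1 to d2\<times>d2 matrices.\<close>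
definition tensor_id :: "nat \<Rightarrow> nat \<Rightarrow> nat \<Rightarrow> (complex mat \<Rightarrow> complex mat) \<Rightarrow> complex mat \<Rightarrow> complex mat" where
  "tensor_id d1 d2 m \<E> M = mat (d2 * m) (d2 * m)
     (\<lambda>(r, c). \<E> (mat d1 d1 (\<lambda>(x, y). M $$ (x * m + r mod m, y * m + c mod m)))
                 $$ (r div m, c div m))"

definition channel :: "nat \<Rightarrow> nat \<Rightarrow> (complex mat \<Rightarrow> complex mat) \<Rightarrow> bool" where
  "channel d1 d2 \<Phi> \<longleftrightarrow>
     (\<forall>M \<in> carrier_mat d1 d1. \<Phi> M \<in> carrier_mat d2 d2) \<and>
     (\<forall>M \<in> carrier_mat d1 d1. \<forall>N \<in> carrier_mat d1 d1. \<Phi> (M + N) = \<Phi> M + \<Phi> N) \<and>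
     (\<forall>M \<in> carrier_mat d1 d1. \<forall>a::complex. \<Phi> (a \<cdot>\<^sub>m M) = a \<cdot>\<^sub>m \<Phi> M) \<and>
     (\<forall>k. \<forall>M \<in> carrier_mat (k * d1) (k * d1). psd M \<longrightarrow> psd (id_tensor k d1 d2 \<Phi> M)) \<and>
     (\<forall>M \<in> carrier_mat d1 d1. mtrace (\<Phi> M) = mtrace M)"

definition ketbra :: "nat \<Rightarrow> nat \<Rightarrow> complex mat" where
  "ketbra K k = mat K K (\<lambda>(i, j). if i = k \<and> j = k then 1 else 0)"

text \<open>Per-round prepared state \<rho>^prep_{AX} = \<Sum>_k p(k) |k\<rangle>\<langle>k|_A \<otimes> \<rho>_k, where the
  labels (i,\<mu>) are enumerated as k < K.\<close>
definition prep_state :: "nat \<Rightarrow> (nat \<Rightarrow> real) \<Rightarrow> (nat \<Rightarrow> complex mat) \<Rightarrow> nat \<Rightarrow> complex mat" where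
  "prep_state K p \<rho> dX = mat (K * dX) (K * dX)
     (\<lambda>(r, c). \<Sum>k<K. complex_of_real (p k) * kron (ketbra K k) (\<rho> k) $$ (r, c))"

text \<open>digit t (most significant first) of an n-digit base-b number m.\<close>
definition digit :: "nat \<Rightarrow> nat \<Rightarrow> nat \<Rightarrow> nat \<Rightarrow> nat" where
  "digit n b m t = (m div b ^ (n - 1 - t)) mod b"

text \<open>Canonical reordering (A X)^{\<otimes> n} \<cong> A^n X^n: entry (r,c) of the result (A^n X^n order)
  is entry (\<pi> r, \<pi> c) of the input ((A X)^n order).\<close>
definition reorder_idx :: "nat \<Rightarrow> nat \<Rightarrow> nat \<Rightarrow> nat \<Rightarrow> nat" where
  "reorder_idx n dA dX r = (\<Sum>t<n. (digit n dA (r div dX ^ n) t * dX + digit n dX (r mod dX ^ n) t)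
                                      * (dA * dX) ^ (n - 1 - t))"

definition reorder :: "nat \<Rightarrow> nat \<Rightarrow> nat \<Rightarrow> complex mat \<Rightarrow> complex mat" where
  "reorder n dA dX M = mat ((dA * dX) ^ n) ((dA * dX) ^ n)
     (\<lambda>(r, c). M $$ (reorder_idx n dA dX r, reorder_idx n dA dX c))"

text \<open>\<epsilon>-secrecy of an n-round protocol with labels k < K, probabilities p, prepared states
  \<rho>_k on C^dX, Bob's system B^n of dimension dB, protocol map \<E> and ideal map \<E>_ideal
  acting on A^n B^n with output dimension dOut.\<close>
definition secret ::
  "nat \<Rightarrow> nat \<Rightarrow> (nat \<Rightarrow> real) \<Rightarrow> (nat \<Rightarrow> complex mat) \<Rightarrow> nat \<Rightarrow> nat \<Rightarrow> nat
   \<Rightarrow> (complex mat \<Rightarrow> complex mat) \<Rightarrow> (complex mat \<Rightarrow> complex mat) \<Rightarrow> real \<Rightarrow> bool" where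
  "secret n K p \<rho> dX dB dOut \<E> \<E>ideal \<epsilon> \<longleftrightarrow>
     (\<forall>dE > 0. \<forall>\<Phi>. channel (dX ^ n) (dB * dE) \<Phi> \<longrightarrow>
        (let \<sigma> = id_tensor (K ^ n) (dX ^ n) (dB * dE) \<Phi>
                    (reorder n K dX (kron_pow n (prep_state K p \<rho> dX)))
         in (1/2) * trace_norm (tensor_id (K ^ n * dB) dOut dE \<E> \<sigma>
                                 - tensor_id (K ^ n * dB) dOut dE \<E>ideal \<sigma>) \<le> \<epsilon>))"

end

theory Submission
  imports Defs
begin

(* Every attack on the real protocol is an attack on the virtual one: if the eavesdropper
   applies \<Phi> to the real signals, she could equally apply \<Phi> \<circ> \<Psi>^(\<otimes>n) to the virtual ones.
   Since \<rho>_k = \<Psi>(\<xi>_k) and the prepared state is classical on A, the map id_(A^n) \<otimes> \<Psi>^(\<otimes>n)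
   sends the virtual n-round prepared state to the real one, so both attacks produce the same
   state on A^n B^n E^n and the virtual secrecy bound applies verbatim. The work lies in showing
   that \<Psi>^(\<otimes>n) = (\<Psi> \<otimes> id) \<circ> (id \<otimes> \<Psi>^(\<otimes>(n-1))) is a channel: complete positivity of \<Psi> \<otimes> id
   reduces to that of id \<otimes> \<Psi> by conjugating with the swap of tensor factors. *)

lemma mult_add_less:
  fixes a i k d :: nat
  assumes "a < k" and "i < d"
  shows "a * d + i < k * d"
proof -
  have "a * d + i < Suc a * d" using assms(2) by simp
  also have "\<dots> \<le> k * d" using assms(1) by (intro mult_le_mono1) simp
  finally show ?thesis .
qed

lemma sum_lessThan_mult:
  fixes k d :: nat
  shows "(\<Sum>r<k * d. f r) = (\<Sum>a<k. \<Sum>x<d. f (a * d + x))"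
proof -
  have "(\<Sum>x\<in>{a * d..<a * d + d}. f x) = (\<Sum>x<d. f (a * d + x))" for a
    by (rule sum.reindex_bij_witness[of _ "\<lambda>x. a * d + x" "\<lambda>r. r - a * d"]) auto
  then show ?thesis by (simp add: sum.nat_group[symmetric])
qed

section \<open>Block decomposition of operators on C^k \<otimes> C^d\<close>

definition block :: "nat \<Rightarrow> complex mat \<Rightarrow> nat \<Rightarrow> nat \<Rightarrow> complex mat" where
  "block d M a b = mat d d (\<lambda>(x, y). M $$ (a * d + x, b * d + y))"

lemma block_carrier [simp]: "block d M a b \<in> carrier_mat d d"
  and block_dim [simp]: "dim_row (block d M a b) = d" "dim_col (block d M a b) = d"
  by (simp_all add: block_def)

lemma block_index [simp]:
  "x < d \<Longrightarrow> y < d \<Longrightarrow> block d M a b $$ (x, y) = M $$ (a * d + x, b * d + y)"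
  by (simp add: block_def)

lemma block_block:
  assumes "i < a" and "j < a"
  shows "block d (block (a * d) M u v) i j = block d M (u * a + i) (v * a + j)"
proof (rule eq_matI)
  fix x y assume "x < dim_row (block d M (u * a + i) (v * a + j))"
    "y < dim_col (block d M (u * a + i) (v * a + j))"
  with assms mult_add_less[of i a x d] mult_add_less[of j a y d]
  show "block d (block (a * d) M u v) i j $$ (x, y) = block d M (u * a + i) (v * a + j) $$ (x, y)"
    by (simp add: algebra_simps)
qed auto

lemma block_add:
  assumes "a < k" "b < k" "M \<in> carrier_mat (k * d) (k * d)" "N \<in> carrier_mat (k * d) (k * d)"
  shows "block d (M + N) a b = block d M a b + block d N a b"
  by (rule eq_matI) (use assms in \<open>auto simp: mult_add_less\<close>)

lemma block_smult:
  assumes "a < k" "b < k" "M \<in> carrier_mat (k * d) (k * d)"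
  shows "block d (c \<cdot>\<^sub>m M) a b = c \<cdot>\<^sub>m block d M a b"
  by (rule eq_matI) (use assms in \<open>auto simp: mult_add_less\<close>)

lemma kron_dim [simp]:
  "dim_row (kron A B) = dim_row A * dim_row B" "dim_col (kron A B) = dim_col A * dim_col B"
  by (simp_all add: kron_def)

lemma kron_index:
  "i < dim_row A * dim_row B \<Longrightarrow> j < dim_col A * dim_col B \<Longrightarrow>
   kron A B $$ (i, j) = A $$ (i div dim_row B, j div dim_col B) * B $$ (i mod dim_row B, j mod dim_col B)"
  by (simp add: kron_def)

lemma kron_carrier [simp]:
  "A \<in> carrier_mat a a \<Longrightarrow> B \<in> carrier_mat b b \<Longrightarrow> kron A B \<in> carrier_mat (a * b) (a * b)"
  by (simp add: kron_def)

lemma kron_index_mult_add: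
  assumes "B \<in> carrier_mat d d" "i < dim_row A" "j < dim_col A" "x < d" "y < d"
  shows "kron A B $$ (i * d + x, j * d + y) = A $$ (i, j) * B $$ (x, y)"
proof -
  have "0 < d" using assms(4) by simp
  with assms show ?thesis by (simp add: kron_index mult_add_less)
qed

lemma block_kron:
  assumes "B \<in> carrier_mat d d" "i < dim_row A" "j < dim_col A"
  shows "block d (kron A B) i j = A $$ (i, j) \<cdot>\<^sub>m B"
  by (rule eq_matI) (use assms in \<open>auto simp: kron_index_mult_add\<close>)

lemma mtrace_block_diagonal:
  assumes "M \<in> carrier_mat (k * d) (k * d)"
  shows "mtrace M = (\<Sum>a<k. mtrace (block d M a a))"
  using assms by (simp add: mtrace_def sum_lessThan_mult)

lemma id_tensor_block:
  "id_tensor k d1 d2 \<Phi> M = mat (k * d2) (k * d2)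
     (\<lambda>(r, c). \<Phi> (block d1 M (r div d2) (c div d2)) $$ (r mod d2, c mod d2))"
  unfolding id_tensor_def block_def by (simp add: mult.commute)

lemma id_tensor_carrier [simp]: "id_tensor k d1 d2 \<Phi> M \<in> carrier_mat (k * d2) (k * d2)"
  and id_tensor_dim [simp]: "dim_row (id_tensor k d1 d2 \<Phi> M) = k * d2" "dim_col (id_tensor k d1 d2 \<Phi> M) = k * d2"
  by (simp_all add: id_tensor_def)

lemma block_id_tensor:
  assumes "a < k" "b < k" and "\<Phi> (block d1 M a b) \<in> carrier_mat d2 d2"
  shows "block d2 (id_tensor k d1 d2 \<Phi> M) a b = \<Phi> (block d1 M a b)"
  by (rule eq_matI) (use assms in \<open>auto simp: id_tensor_block mult_add_less\<close>)

lemma id_tensor_eqI: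
  assumes N: "N \<in> carrier_mat (k * d2) (k * d2)"
    and blocks: "\<And>a b. a < k \<Longrightarrow> b < k \<Longrightarrow> \<Phi> (block d1 M a b) = block d2 N a b"
  shows "id_tensor k d1 d2 \<Phi> M = N"
proof (rule eq_matI)
  fix r c assume "r < dim_row N" "c < dim_col N"
  with N have rc: "r < k * d2" "c < k * d2" by auto
  then have "0 < d2" by (auto intro: gr0I)
  moreover have "r div d2 < k" "c div d2 < k" using rc by (auto simp: less_mult_imp_div_less)
  ultimately show "id_tensor k d1 d2 \<Phi> M $$ (r, c) = N $$ (r, c)"
    using rc by (simp add: id_tensor_block blocks)
qed (use N in auto)

lemma id_tensor_ident:
  assumes "M \<in> carrier_mat (k * d) (k * d)"
  shows "id_tensor k d d (\<lambda>X. X) M = M"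
  by (rule id_tensor_eqI) (use assms in auto)

lemma id_tensor_comp:
  assumes F: "\<And>X. X \<in> carrier_mat d1 d1 \<Longrightarrow> F X \<in> carrier_mat d2 d2"
    and G: "\<And>X. X \<in> carrier_mat d2 d2 \<Longrightarrow> G X \<in> carrier_mat d3 d3"
  shows "id_tensor k d1 d3 (G \<circ> F) M = id_tensor k d2 d3 G (id_tensor k d1 d2 F M)"
  by (rule id_tensor_eqI) (simp_all add: block_id_tensor F G)

lemma id_tensor_id_tensor:
  assumes \<Phi>: "\<And>X. X \<in> carrier_mat d1 d1 \<Longrightarrow> \<Phi> X \<in> carrier_mat d2 d2"
  shows "id_tensor k (a * d1) (a * d2) (id_tensor a d1 d2 \<Phi>) M = id_tensor (k * a) d1 d2 \<Phi> M"
proof (rule id_tensor_eqI)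
  fix u v assume uv: "u < k" "v < k"
  show "id_tensor a d1 d2 \<Phi> (block (a * d1) M u v) = block (a * d2) (id_tensor (k * a) d1 d2 \<Phi> M) u v"
  proof (rule id_tensor_eqI)
    fix i j assume "i < a" "j < a"
    moreover have "u * a + i < k * a" "v * a + j < k * a"
      using uv \<open>i < a\<close> \<open>j < a\<close> by (simp_all add: mult_add_less)
    ultimately show "\<Phi> (block d1 (block (a * d1) M u v) i j)
        = block d2 (block (a * d2) (id_tensor (k * a) d1 d2 \<Phi> M) u v) i j"
      by (simp add: block_block block_id_tensor \<Phi>)
  qed simp
qed (metis id_tensor_carrier mult.assoc)

lemma channelI:
  assumes "\<And>M. M \<in> carrier_mat d1 d1 \<Longrightarrow> \<Phi> M \<in> carrier_mat d2 d2"
    and "\<And>M N. M \<in> carrier_mat d1 d1 \<Longrightarrow> N \<in> carrier_mat d1 d1 \<Longrightarrow> \<Phi> (M + N) = \<Phi> M + \<Phi> N"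
    and "\<And>M a. M \<in> carrier_mat d1 d1 \<Longrightarrow> \<Phi> (a \<cdot>\<^sub>m M) = a \<cdot>\<^sub>m \<Phi> M"
    and "\<And>k M. M \<in> carrier_mat (k * d1) (k * d1) \<Longrightarrow> psd M \<Longrightarrow> psd (id_tensor k d1 d2 \<Phi> M)"
    and "\<And>M. M \<in> carrier_mat d1 d1 \<Longrightarrow> mtrace (\<Phi> M) = mtrace M"
  shows "channel d1 d2 \<Phi>"
  using assms unfolding channel_def by blast

lemma
  assumes "channel d1 d2 \<Phi>"
  shows channel_carrier: "M \<in> carrier_mat d1 d1 \<Longrightarrow> \<Phi> M \<in> carrier_mat d2 d2"
    and channel_add: "M \<in> carrier_mat d1 d1 \<Longrightarrow> N \<in> carrier_mat d1 d1 \<Longrightarrow> \<Phi> (M + N) = \<Phi> M + \<Phi> N"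
    and channel_smult: "M \<in> carrier_mat d1 d1 \<Longrightarrow> \<Phi> (a \<cdot>\<^sub>m M) = a \<cdot>\<^sub>m \<Phi> M"
    and channel_psd: "M \<in> carrier_mat (k * d1) (k * d1) \<Longrightarrow> psd M \<Longrightarrow> psd (id_tensor k d1 d2 \<Phi> M)"
    and channel_mtrace: "M \<in> carrier_mat d1 d1 \<Longrightarrow> mtrace (\<Phi> M) = mtrace M"
  using assms unfolding channel_def by blast+

lemma channel_zero:
  assumes "channel d1 d2 \<Phi>"
  shows "\<Phi> (0\<^sub>m d1 d1) = 0\<^sub>m d2 d2"
proof -
  have "\<Phi> (0\<^sub>m d1 d1) = \<Phi> (0 \<cdot>\<^sub>m 0\<^sub>m d1 d1)" by simp
  also have "\<dots> = 0 \<cdot>\<^sub>m \<Phi> (0\<^sub>m d1 d1)" by (rule channel_smult[OF assms zero_carrier_mat])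
  also have "\<dots> = 0\<^sub>m d2 d2" using channel_carrier[OF assms zero_carrier_mat] by auto
  finally show ?thesis .
qed

lemma id_tensor_add:
  assumes "channel d1 d2 \<Phi>" and "M \<in> carrier_mat (k * d1) (k * d1)" "N \<in> carrier_mat (k * d1) (k * d1)"
  shows "id_tensor k d1 d2 \<Phi> (M + N) = id_tensor k d1 d2 \<Phi> M + id_tensor k d1 d2 \<Phi> N"
  by (rule id_tensor_eqI)
    (use assms in \<open>auto simp: block_add block_id_tensor channel_add channel_carrier\<close>)

lemma id_tensor_smult:
  assumes "channel d1 d2 \<Phi>" and "M \<in> carrier_mat (k * d1) (k * d1)"
  shows "id_tensor k d1 d2 \<Phi> (c \<cdot>\<^sub>m M) = c \<cdot>\<^sub>m id_tensor k d1 d2 \<Phi> M"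
  by (rule id_tensor_eqI)
    (use assms in \<open>auto simp: block_smult block_id_tensor channel_smult channel_carrier\<close>)

lemma mtrace_id_tensor:
  assumes "channel d1 d2 \<Phi>" and "M \<in> carrier_mat (k * d1) (k * d1)"
  shows "mtrace (id_tensor k d1 d2 \<Phi> M) = mtrace M"
  using assms
  by (simp add: mtrace_block_diagonal[of _ k d2] mtrace_block_diagonal[of M k d1]
      block_id_tensor channel_carrier channel_mtrace)

lemma id_tensor_kron:
  assumes "channel d1 d2 \<Phi>" and "A \<in> carrier_mat a a" "B \<in> carrier_mat d1 d1"
  shows "id_tensor a d1 d2 \<Phi> (kron A B) = kron A (\<Phi> B)"
  by (rule id_tensor_eqI)
    (use assms in \<open>auto simp: block_kron channel_carrier channel_smult\<close>)

lemma channel_comp: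
  assumes F: "channel d1 d2 F" and G: "channel d2 d3 G"
  shows "channel d1 d3 (G \<circ> F)"
proof (rule channelI)
  fix k and M :: "complex mat" assume "M \<in> carrier_mat (k * d1) (k * d1)" "psd M"
  then have "psd (id_tensor k d2 d3 G (id_tensor k d1 d2 F M))"
    using F G by (simp add: channel_psd)
  moreover have "id_tensor k d1 d3 (G \<circ> F) M = id_tensor k d2 d3 G (id_tensor k d1 d2 F M)"
    by (rule id_tensor_comp) (simp_all add: channel_carrier[OF F] channel_carrier[OF G])
  ultimately show "psd (id_tensor k d1 d3 (G \<circ> F) M)"
    by simp
qed (use F G in \<open>simp_all add: channel_carrier channel_add channel_smult channel_mtrace\<close>)

lemma channel_ident: "channel d d (\<lambda>X. X)"
  by (rule channelI) (simp_all add: id_tensor_ident)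

lemma channel_id_tensor:
  assumes "channel d1 d2 \<Phi>"
  shows "channel (a * d1) (a * d2) (id_tensor a d1 d2 \<Phi>)"
proof (rule channelI)
  fix k and M :: "complex mat" assume "M \<in> carrier_mat (k * (a * d1)) (k * (a * d1))" "psd M"
  then show "psd (id_tensor k (a * d1) (a * d2) (id_tensor a d1 d2 \<Phi>) M)"
    using assms by (simp add: id_tensor_id_tensor channel_carrier channel_psd mult.assoc)
qed (use assms in \<open>simp_all add: id_tensor_add id_tensor_smult mtrace_id_tensor\<close>)

section \<open>Reindexing and swapping tensor factors\<close>

lemma psd_iff_quadratic_form:
  assumes "M \<in> carrier_mat m m"
  shows "psd M \<longleftrightarrow> (\<forall>v \<in> carrier_vec m.
    let z = (\<Sum>i<m. \<Sum>j<m. cnj (v $ i) * (M $$ (i, j) * v $ j)) in Im z = 0 \<and> 0 \<le> Re z)"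
proof -
  have "(\<Sum>i<m. cnj (v $ i) * (M *\<^sub>v v) $ i) = (\<Sum>i<m. \<Sum>j<m. cnj (v $ i) * (M $$ (i, j) * v $ j))"
    if "v \<in> carrier_vec m" for v
    using assms that by (simp add: scalar_prod_def sum_distrib_left atLeast0LessThan)
  then show ?thesis
    using assms by (auto simp: psd_def Let_def)
qed

definition reindex_mat :: "nat \<Rightarrow> (nat \<Rightarrow> nat) \<Rightarrow> complex mat \<Rightarrow> complex mat" where
  "reindex_mat n \<pi> M = mat n n (\<lambda>(r, c). M $$ (\<pi> r, \<pi> c))"

lemma reindex_mat_carrier [simp]: "reindex_mat n \<pi> M \<in> carrier_mat n n"
  by (simp add: reindex_mat_def)

lemma reindex_mat_index [simp]: "r < n \<Longrightarrow> c < n \<Longrightarrow> reindex_mat n \<pi> M $$ (r, c) = M $$ (\<pi> r, \<pi> c)"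
  by (simp add: reindex_mat_def)

lemma reindex_mat_dim [simp]: "dim_row (reindex_mat n \<pi> M) = n" "dim_col (reindex_mat n \<pi> M) = n"
  by (simp_all add: reindex_mat_def)

lemma sum_fibres:
  fixes \<pi> :: "nat \<Rightarrow> nat"
  assumes "\<forall>r<n. \<pi> r < m"
  shows "(\<Sum>i<m. \<Sum>r | r < n \<and> \<pi> r = i. g i r) = (\<Sum>r<n. g (\<pi> r) r)"
proof -
  have "(\<Sum>i<m. \<Sum>r | r < n \<and> \<pi> r = i. g i r) = (\<Sum>i<m. \<Sum>r\<in>{r \<in> {..<n}. \<pi> r = i}. g (\<pi> r) r)"
    by (intro sum.cong) auto
  also have "\<dots> = (\<Sum>r<n. g (\<pi> r) r)"
    by (rule sum.group) (use assms in auto)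
  finally show ?thesis .
qed

text \<open>For any index map \<pi>, reindex_mat n \<pi> M is the compression V* M V by the matrix V
  whose r-th column is the unit vector e_(\<pi> r); hence it is positive along with M.\<close>
lemma psd_reindex_mat:
  assumes M: "M \<in> carrier_mat m m" and "psd M" and \<pi>: "\<forall>r<n. \<pi> r < m"
  shows "psd (reindex_mat n \<pi> M)"
  unfolding psd_iff_quadratic_form[OF reindex_mat_carrier] Let_def
proof
  fix v :: "complex vec"
  define w where "w = vec m (\<lambda>i. \<Sum>r | r < n \<and> \<pi> r = i. v $ r)"
  have "(\<Sum>i<m. \<Sum>j<m. cnj (w $ i) * (M $$ (i, j) * w $ j))
      = (\<Sum>i<m. \<Sum>j<m. \<Sum>r | r < n \<and> \<pi> r = i. \<Sum>c | c < n \<and> \<pi> c = j.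
           cnj (v $ r) * (M $$ (i, j) * v $ c))"
    by (intro sum.cong refl) (simp add: w_def sum_distrib_left sum_distrib_right, rule sum.swap)
  also have "\<dots> = (\<Sum>i<m. \<Sum>r | r < n \<and> \<pi> r = i. \<Sum>j<m. \<Sum>c | c < n \<and> \<pi> c = j.
           cnj (v $ r) * (M $$ (i, j) * v $ c))"
    by (rule sum.cong[OF refl], rule sum.swap)
  also have "\<dots> = (\<Sum>r<n. \<Sum>c<n. cnj (v $ r) * (M $$ (\<pi> r, \<pi> c) * v $ c))"
    by (simp only: sum_fibres[OF \<pi>])
  also have "\<dots> = (\<Sum>r<n. \<Sum>c<n. cnj (v $ r) * (reindex_mat n \<pi> M $$ (r, c) * v $ c))"
    by (intro sum.cong refl) simp
  finally have w: "(\<Sum>i<m. \<Sum>j<m. cnj (w $ i) * (M $$ (i, j) * w $ j))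
      = (\<Sum>r<n. \<Sum>c<n. cnj (v $ r) * (reindex_mat n \<pi> M $$ (r, c) * v $ c))" .
  have "w \<in> carrier_vec m" by (simp add: w_def)
  with \<open>psd M\<close> psd_iff_quadratic_form[OF M]
  show "Im (\<Sum>r<n. \<Sum>c<n. cnj (v $ r) * (reindex_mat n \<pi> M $$ (r, c) * v $ c)) = 0 \<and>
      0 \<le> Re (\<Sum>r<n. \<Sum>c<n. cnj (v $ r) * (reindex_mat n \<pi> M $$ (r, c) * v $ c))"
    unfolding w[symmetric] Let_def by blast
qed

lemma id_tensor_reindex_mat:
  assumes "\<forall>r<d. \<pi> r < d"
  shows "id_tensor k d d (reindex_mat d \<pi>) M = reindex_mat (k * d) (\<lambda>r. r div d * d + \<pi> (r mod d)) M"
proof (rule id_tensor_eqI)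
  fix a b assume "a < k" "b < k"
  then show "reindex_mat d \<pi> (block d M a b) = block d (reindex_mat (k * d) (\<lambda>r. r div d * d + \<pi> (r mod d)) M) a b"
    by (intro eq_matI) (use assms in \<open>auto simp: mult_add_less\<close>)
qed simp

lemma channel_reindex_mat:
  assumes \<pi>: "bij_betw \<pi> {..<n} {..<n}"
  shows "channel n n (reindex_mat n \<pi>)"
proof -
  have \<pi>_less: "\<forall>r<n. \<pi> r < n" using bij_betwE[OF \<pi>] by blast
  show ?thesis
  proof (rule channelI)
    fix k and M :: "complex mat" assume "M \<in> carrier_mat (k * n) (k * n)" "psd M"
    moreover have "r div n * n + \<pi> (r mod n) < k * n" if "r < k * n" for r
    proof -
      have "0 < n" using that by (auto intro: gr0I)
      then show ?thesis using that \<pi>_less by (auto intro!: mult_add_less simp: less_mult_imp_div_less)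
    qed
    ultimately show "psd (id_tensor k n n (reindex_mat n \<pi>) M)"
      by (simp add: id_tensor_reindex_mat \<pi>_less psd_reindex_mat)
  next
    fix M :: "complex mat" assume "M \<in> carrier_mat n n"
    then show "mtrace (reindex_mat n \<pi> M) = mtrace M"
      by (simp add: mtrace_def sum.reindex_bij_betw[OF \<pi>, of "\<lambda>i. M $$ (i, i)"])
  qed (use \<pi>_less in \<open>auto intro!: eq_matI\<close>)
qed

text \<open>swap_index a b maps the index i * b + j of C^a \<otimes> C^b to the index j * a + i of C^b \<otimes> C^a.\<close>
definition swap_index :: "nat \<Rightarrow> nat \<Rightarrow> nat \<Rightarrow> nat" where
  "swap_index a b r = r mod b * a + r div b"

lemma swap_index_div_mod:
  assumes "r < a * b"
  shows "swap_index a b r div a = r mod b" and "swap_index a b r mod a = r div b"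
proof -
  have "r div b < a" using assms by (simp add: less_mult_imp_div_less)
  then show "swap_index a b r div a = r mod b" "swap_index a b r mod a = r div b"
    by (simp_all add: swap_index_def)
qed

lemma swap_index_less:
  assumes "r < a * b"
  shows "swap_index a b r < b * a"
proof -
  have "0 < b" "r div b < a" using assms by (auto simp: less_mult_imp_div_less intro: gr0I)
  then show ?thesis unfolding swap_index_def by (simp add: mult_add_less)
qed

lemma bij_swap_index: "bij_betw (swap_index a b) {..<a * b} {..<a * b}"
proof (rule bij_betw_byWitness[of _ "swap_index b a"])
  show "\<forall>r\<in>{..<a * b}. swap_index b a (swap_index a b r) = r"
    by (simp add: swap_index_def[of b a] swap_index_div_mod)
  show "\<forall>r\<in>{..<a * b}. swap_index a b (swap_index b a r) = r"
    by (simp add: swap_index_def[of a b] swap_index_div_mod mult.commute[of a b])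
  show "swap_index a b ` {..<a * b} \<subseteq> {..<a * b}"
    using swap_index_less[of _ a b] by (auto simp: mult.commute)
  show "swap_index b a ` {..<a * b} \<subseteq> {..<a * b}"
    using swap_index_less[of _ b a] by (auto simp: mult.commute)
qed

lemma tensor_id_swap:
  "tensor_id d1 d2 m \<Psi> M = reindex_mat (d2 * m) (swap_index d2 m)
     (id_tensor m d1 d2 \<Psi> (reindex_mat (m * d1) (swap_index m d1) M))" (is "_ = ?R")
proof (rule eq_matI)
  fix r c assume "r < dim_row ?R" "c < dim_col ?R"
  then have rc: "r < d2 * m" "c < d2 * m" by simp_all
  then have "0 < m" by (auto intro: gr0I)
  have "block d1 (reindex_mat (m * d1) (swap_index m d1) M) (r mod m) (c mod m)
      = mat d1 d1 (\<lambda>(x, y). M $$ (x * m + r mod m, y * m + c mod m))"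
    by (rule eq_matI) (use \<open>0 < m\<close> in \<open>auto simp: mult_add_less swap_index_def\<close>)
  with rc swap_index_less[OF rc(1)] swap_index_less[OF rc(2)]
  show "tensor_id d1 d2 m \<Psi> M $$ (r, c) = ?R $$ (r, c)"
    by (simp add: tensor_id_def id_tensor_block swap_index_div_mod)
qed (simp_all add: tensor_id_def)

lemma channel_tensor_id:
  assumes "channel d1 d2 \<Psi>"
  shows "channel (d1 * m) (d2 * m) (tensor_id d1 d2 m \<Psi>)"
proof -
  have swap: "channel (a * b) (a * b) (reindex_mat (a * b) (swap_index a b))" for a b
    by (rule channel_reindex_mat[OF bij_swap_index])
  have "channel (m * d1) (m * d2) (id_tensor m d1 d2 \<Psi> \<circ> reindex_mat (m * d1) (swap_index m d1))"
    by (rule channel_comp[OF swap channel_id_tensor[OF assms]])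
  moreover have "channel (m * d2) (d2 * m) (reindex_mat (d2 * m) (swap_index d2 m))"
    using swap[of d2 m] by (simp add: mult.commute)
  ultimately have "channel (m * d1) (d2 * m) (reindex_mat (d2 * m) (swap_index d2 m)
      \<circ> id_tensor m d1 d2 \<Psi> \<circ> reindex_mat (m * d1) (swap_index m d1))"
    by (simp add: channel_comp comp_assoc)
  moreover have "tensor_id d1 d2 m \<Psi> = reindex_mat (d2 * m) (swap_index d2 m)
      \<circ> id_tensor m d1 d2 \<Psi> \<circ> reindex_mat (m * d1) (swap_index m d1)"
    by (rule ext) (simp add: tensor_id_swap)
  ultimately show ?thesis by (simp add: mult.commute)
qed

lemma reindex_swap_index_kron:
  assumes "A \<in> carrier_mat a a" "C \<in> carrier_mat b b"
  shows "reindex_mat (b * a) (swap_index b a) (kron A C) = kron C A"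
proof (rule eq_matI)
  fix r c assume "r < dim_row (kron C A)" "c < dim_col (kron C A)"
  with assms have rc: "r < b * a" "c < b * a" by auto
  with swap_index_less[OF rc(1)] swap_index_less[OF rc(2)]
  show "reindex_mat (b * a) (swap_index b a) (kron A C) $$ (r, c) = kron C A $$ (r, c)"
    using assms by (simp add: kron_index swap_index_div_mod)
qed (use assms in auto)

lemma tensor_id_kron:
  assumes "channel d1 d2 \<Psi>" and "A \<in> carrier_mat d1 d1" "C \<in> carrier_mat m m"
  shows "tensor_id d1 d2 m \<Psi> (kron A C) = kron (\<Psi> A) C"
  using assms channel_carrier[OF assms(1,2)]
  by (simp add: tensor_id_swap reindex_swap_index_kron id_tensor_kron)

section \<open>Tensor powers of a channel\<close>

fun tensor_power_map :: "nat \<Rightarrow> nat \<Rightarrow> nat \<Rightarrow> (complex mat \<Rightarrow> complex mat) \<Rightarrow> complex mat \<Rightarrow> complex mat" where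
  "tensor_power_map 0 d1 d2 \<Psi> = (\<lambda>M. M)"
| "tensor_power_map (Suc n) d1 d2 \<Psi> =
     tensor_id d1 d2 (d2 ^ n) \<Psi> \<circ> id_tensor d1 (d1 ^ n) (d2 ^ n) (tensor_power_map n d1 d2 \<Psi>)"

lemma channel_tensor_power_map:
  assumes "channel d1 d2 \<Psi>"
  shows "channel (d1 ^ n) (d2 ^ n) (tensor_power_map n d1 d2 \<Psi>)"
proof (induction n)
  case 0
  show ?case by (simp add: channel_ident)
next
  case (Suc n)
  have "channel (d1 * d1 ^ n) (d2 * d2 ^ n) (tensor_power_map (Suc n) d1 d2 \<Psi>)"
    unfolding tensor_power_map.simps
    by (rule channel_comp[OF channel_id_tensor[OF Suc] channel_tensor_id[OF assms]])
  then show ?case by (simp only: power_Suc)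
qed

lemma tensor_power_map_kron:
  assumes "channel d1 d2 \<Psi>" and "A \<in> carrier_mat d1 d1" "B \<in> carrier_mat (d1 ^ n) (d1 ^ n)"
  shows "tensor_power_map (Suc n) d1 d2 \<Psi> (kron A B) = kron (\<Psi> A) (tensor_power_map n d1 d2 \<Psi> B)"
  using assms channel_carrier[OF channel_tensor_power_map[OF assms(1)] assms(3)]
  by (simp add: id_tensor_kron[OF channel_tensor_power_map] tensor_id_kron)

section \<open>Prepared states\<close>

lemma prep_state_carrier [simp]: "prep_state K p \<sigma> dX \<in> carrier_mat (K * dX) (K * dX)"
  by (simp add: prep_state_def)

lemma block_prep_state:
  assumes ij: "i < K" "j < K" and \<sigma>: "\<forall>k<K. \<sigma> k \<in> carrier_mat dX dX"
  shows "block dX (prep_state K p \<sigma> dX) i j = (if i = j then complex_of_real (p i) \<cdot>\<^sub>m \<sigma> i else 0\<^sub>m dX dX)"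
proof (rule eq_matI)
  fix x y assume "x < dim_row (if i = j then complex_of_real (p i) \<cdot>\<^sub>m \<sigma> i else 0\<^sub>m dX dX)"
    "y < dim_col (if i = j then complex_of_real (p i) \<cdot>\<^sub>m \<sigma> i else 0\<^sub>m dX dX)"
  then have xy: "x < dX" "y < dX" using \<sigma> ij by (auto split: if_splits)
  have "block dX (prep_state K p \<sigma> dX) i j $$ (x, y)
      = (\<Sum>k<K. complex_of_real (p k) * kron (ketbra K k) (\<sigma> k) $$ (i * dX + x, j * dX + y))"
    using ij xy by (simp add: prep_state_def mult_add_less)
  also have "\<dots> = (\<Sum>k<K. if k = i \<and> k = j then complex_of_real (p k) * \<sigma> k $$ (x, y) else 0)"
    by (rule sum.cong) (use ij xy \<sigma> in \<open>auto simp: kron_index_mult_add ketbra_def\<close>)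
  also have "\<dots> = (if i = j then complex_of_real (p i) \<cdot>\<^sub>m \<sigma> i else 0\<^sub>m dX dX) $$ (x, y)"
    using ij xy \<sigma> by (auto simp: sum.delta' sum.neutral)
  finally show "block dX (prep_state K p \<sigma> dX) i j $$ (x, y)
      = (if i = j then complex_of_real (p i) \<cdot>\<^sub>m \<sigma> i else 0\<^sub>m dX dX) $$ (x, y)" .
qed (use \<sigma> ij in auto)

lemma digit_Suc_0: "digit (Suc n) b m 0 = m div b ^ n mod b"
  by (simp add: digit_def)

lemma digit_Suc_Suc:
  assumes "t < n"
  shows "digit (Suc n) b m (Suc t) = digit n b (m mod b ^ n) t"
proof -
  define c where "c = b ^ (n - 1 - t)"
  have n: "n = (n - 1 - t) + Suc t" using assms by simp
  have "b ^ n = b ^ (n - 1 - t) * b ^ Suc t" by (subst n) (rule power_add)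
  then have bn: "b ^ n = c * (b * b ^ t)" by (simp add: c_def)
  have "m mod (c * (b * b ^ t)) = c * (m div c mod (b * b ^ t)) + m mod c" by (rule mod_mult2_eq)
  then have "m mod (c * (b * b ^ t)) div c = m div c mod (b * b ^ t)"
    by (cases "c = 0") (simp_all add: add.commute)
  then have "m mod b ^ n div c mod b = m div c mod b"
    by (simp add: bn mod_mod_cancel)
  then show ?thesis by (simp add: digit_def c_def)
qed

lemma reorder_idx_Suc:
  assumes "0 < dX"
  shows "reorder_idx (Suc n) dA dX r =
    (r div dX ^ Suc n div dA ^ n mod dA * dX + r mod dX ^ Suc n div dX ^ n mod dX) * (dA * dX) ^ n
    + reorder_idx n dA dX (r div dX ^ Suc n mod dA ^ n * dX ^ n + r mod dX ^ Suc n mod dX ^ n)"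
proof -
  define a where "a = r div dX ^ Suc n"
  define x where "x = r mod dX ^ Suc n"
  define r' where "r' = a mod dA ^ n * dX ^ n + x mod dX ^ n"
  have r': "r' div dX ^ n = a mod dA ^ n" "r' mod dX ^ n = x mod dX ^ n"
    using assms by (simp_all add: r'_def)
  have "reorder_idx (Suc n) dA dX r =
      (\<Sum>t<Suc n. (digit (Suc n) dA a t * dX + digit (Suc n) dX x t) * (dA * dX) ^ (Suc n - 1 - t))"
    by (simp add: reorder_idx_def a_def x_def)
  also have "\<dots> = (digit (Suc n) dA a 0 * dX + digit (Suc n) dX x 0) * (dA * dX) ^ n
      + (\<Sum>t<n. (digit (Suc n) dA a (Suc t) * dX + digit (Suc n) dX x (Suc t)) * (dA * dX) ^ (n - 1 - t))"
    by (simp only: sum.lessThan_Suc_shift) simp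
  also have "(\<Sum>t<n. (digit (Suc n) dA a (Suc t) * dX + digit (Suc n) dX x (Suc t)) * (dA * dX) ^ (n - 1 - t))
      = reorder_idx n dA dX r'"
    unfolding reorder_idx_def r' by (rule sum.cong) (simp_all add: digit_Suc_Suc)
  finally show ?thesis by (simp add: digit_Suc_0 a_def x_def r'_def)
qed

lemma reorder_idx_less:
  assumes "0 < dA" and "0 < dX"
  shows "reorder_idx n dA dX r < (dA * dX) ^ n"
proof (induction n arbitrary: r)
  case 0
  then show ?case by (simp add: reorder_idx_def)
next
  case (Suc n)
  have "r div dX ^ Suc n div dA ^ n mod dA * dX + r mod dX ^ Suc n div dX ^ n mod dX < dA * dX"
    using assms by (intro mult_add_less) auto
  from mult_add_less[OF this Suc.IH] show ?case
    by (simp add: reorder_idx_Suc[OF assms(2)])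
qed

lemma reorder_idx_Suc_mult_add:
  assumes "a < dA ^ Suc n" and "x < dX ^ Suc n"
  shows "reorder_idx (Suc n) dA dX (a * dX ^ Suc n + x) =
    (a div dA ^ n * dX + x div dX ^ n) * (dA * dX) ^ n + reorder_idx n dA dX (a mod dA ^ n * dX ^ n + x mod dX ^ n)"
proof -
  have "a div dA ^ n < dA" "x div dX ^ n < dX" "0 < dX"
    using assms by (auto simp: less_mult_imp_div_less mult.commute intro: gr0I)
  with assms show ?thesis by (simp add: reorder_idx_Suc)
qed

lemma reorder_index [simp]:
  "r < (dA * dX) ^ n \<Longrightarrow> c < (dA * dX) ^ n \<Longrightarrow>
   reorder n dA dX M $$ (r, c) = M $$ (reorder_idx n dA dX r, reorder_idx n dA dX c)"
  and reorder_carrier [simp]: "reorder n dA dX M \<in> carrier_mat ((dA * dX) ^ n) ((dA * dX) ^ n)"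
  by (simp_all add: reorder_def)

lemma block_reorder_kron:
  assumes P: "P \<in> carrier_mat (K * dX) (K * dX)" and Q: "Q \<in> carrier_mat ((K * dX) ^ n) ((K * dX) ^ n)"
    and a: "a < K ^ Suc n" and b: "b < K ^ Suc n"
  shows "block (dX ^ Suc n) (reorder (Suc n) K dX (kron P Q)) a b =
    kron (block dX P (a div K ^ n) (b div K ^ n)) (block (dX ^ n) (reorder n K dX Q) (a mod K ^ n) (b mod K ^ n))"
    (is "?B = kron ?P' ?Q'")
proof (rule eq_matI)
  fix x y assume "x < dim_row (kron ?P' ?Q')" "y < dim_col (kron ?P' ?Q')"
  then have xy: "x < dX * dX ^ n" "y < dX * dX ^ n" by simp_all
  then have "0 < K" "0 < dX" using a by (auto intro: gr0I)
  define x' where "x' = a mod K ^ n * dX ^ n + x mod dX ^ n"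
  define y' where "y' = b mod K ^ n * dX ^ n + y mod dX ^ n"
  have div_less: "a div K ^ n < K" "b div K ^ n < K" "x div dX ^ n < dX" "y div dX ^ n < dX"
    using a b xy by (simp_all add: less_mult_imp_div_less mult.commute)
  have mod_less: "a mod K ^ n < K ^ n" "b mod K ^ n < K ^ n" "x mod dX ^ n < dX ^ n" "y mod dX ^ n < dX ^ n"
    using \<open>0 < K\<close> \<open>0 < dX\<close> by simp_all
  have "x' < K ^ n * dX ^ n" "y' < K ^ n * dX ^ n"
    unfolding x'_def y'_def using mod_less by (simp_all add: mult_add_less)
  then have x'_less: "x' < (K * dX) ^ n" and y'_less: "y' < (K * dX) ^ n"
    by (simp_all only: power_mult_distrib)
  have xs: "x < dX ^ Suc n" "y < dX ^ Suc n" using xy by simp_all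
  have "a * dX ^ Suc n + x < K ^ Suc n * dX ^ Suc n" "b * dX ^ Suc n + y < K ^ Suc n * dX ^ Suc n"
    using mult_add_less[OF a xs(1)] mult_add_less[OF b xs(2)] .
  then have "a * dX ^ Suc n + x < (K * dX) ^ Suc n" "b * dX ^ Suc n + y < (K * dX) ^ Suc n"
    by (simp_all only: power_mult_distrib)
  then have "?B $$ (x, y) = kron P Q $$ ((a div K ^ n * dX + x div dX ^ n) * (K * dX) ^ n + reorder_idx n K dX x',
                     (b div K ^ n * dX + y div dX ^ n) * (K * dX) ^ n + reorder_idx n K dX y')"
    using a b xs by (simp add: reorder_idx_Suc_mult_add x'_def y'_def del: power_Suc)
  also have "\<dots> = P $$ (a div K ^ n * dX + x div dX ^ n, b div K ^ n * dX + y div dX ^ n)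
      * Q $$ (reorder_idx n K dX x', reorder_idx n K dX y')"
    using P div_less reorder_idx_less[OF \<open>0 < K\<close> \<open>0 < dX\<close>]
    by (intro kron_index_mult_add[OF Q]) (simp_all add: mult_add_less)
  also have "\<dots> = kron ?P' ?Q' $$ (x, y)"
    using xy div_less mod_less x'_less y'_less
    by (simp add: kron_index x'_def y'_def)
  finally show "?B $$ (x, y) = kron ?P' ?Q' $$ (x, y)" .
qed simp_all

text \<open>The n-round prepared state with registers ordered A^n X^n, as it occurs in secret.\<close>
definition prep_power :: "nat \<Rightarrow> nat \<Rightarrow> (nat \<Rightarrow> real) \<Rightarrow> (nat \<Rightarrow> complex mat) \<Rightarrow> nat \<Rightarrow> complex mat" where
  "prep_power n K p \<sigma> dX = reorder n K dX (kron_pow n (prep_state K p \<sigma> dX))"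

lemma kron_pow_carrier: "M \<in> carrier_mat d d \<Longrightarrow> kron_pow n M \<in> carrier_mat (d ^ n) (d ^ n)"
  by (induction n) auto

lemma block_prep_power_Suc:
  assumes "a < K ^ Suc n" and "b < K ^ Suc n"
  shows "block (dX ^ Suc n) (prep_power (Suc n) K p \<sigma> dX) a b =
    kron (block dX (prep_state K p \<sigma> dX) (a div K ^ n) (b div K ^ n))
      (block (dX ^ n) (prep_power n K p \<sigma> dX) (a mod K ^ n) (b mod K ^ n))"
  unfolding prep_power_def kron_pow.simps
  by (rule block_reorder_kron[OF prep_state_carrier kron_pow_carrier[OF prep_state_carrier] assms])

lemma tensor_power_map_block_prep_power:
  assumes \<Psi>: "channel dV dR \<Psi>" and \<xi>: "\<forall>k<K. \<xi> k \<in> carrier_mat dV dV"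
    and \<rho>: "\<forall>k<K. \<rho> k = \<Psi> (\<xi> k)"
  shows "a < K ^ n \<Longrightarrow> b < K ^ n \<Longrightarrow>
    tensor_power_map n dV dR \<Psi> (block (dV ^ n) (prep_power n K p \<xi> dV) a b)
      = block (dR ^ n) (prep_power n K p \<rho> dR) a b"
proof (induction n arbitrary: a b)
  case 0
  then show ?case
    by (intro eq_matI) (auto simp: prep_power_def reorder_idx_def)
next
  case (Suc n)
  define a0 where "a0 = a div K ^ n"
  define b0 where "b0 = b div K ^ n"
  define a' where "a' = a mod K ^ n"
  define b' where "b' = b mod K ^ n"
  have "0 < K" using Suc.prems by (auto intro: gr0I)
  then have "a0 < K" "b0 < K" "a' < K ^ n" "b' < K ^ n"
    using Suc.prems by (auto simp: a0_def b0_def a'_def b'_def less_mult_imp_div_less mult.commute)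
  moreover have "\<forall>k<K. \<rho> k \<in> carrier_mat dR dR" using \<rho> \<xi> channel_carrier[OF \<Psi>] by simp
  ultimately have first_round: "\<Psi> (block dV (prep_state K p \<xi> dV) a0 b0) = block dR (prep_state K p \<rho> dR) a0 b0"
    using \<xi> \<rho> by (simp add: block_prep_state channel_smult[OF \<Psi>] channel_zero[OF \<Psi>])
  have "tensor_power_map (Suc n) dV dR \<Psi> (block (dV ^ Suc n) (prep_power (Suc n) K p \<xi> dV) a b)
      = tensor_power_map (Suc n) dV dR \<Psi>
          (kron (block dV (prep_state K p \<xi> dV) a0 b0) (block (dV ^ n) (prep_power n K p \<xi> dV) a' b'))"
    by (simp only: block_prep_power_Suc[OF Suc.prems] a0_def b0_def a'_def b'_def)
  also have "\<dots> = kron (\<Psi> (block dV (prep_state K p \<xi> dV) a0 b0))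
      (tensor_power_map n dV dR \<Psi> (block (dV ^ n) (prep_power n K p \<xi> dV) a' b'))"
    by (rule tensor_power_map_kron[OF \<Psi>]) simp_all
  also have "\<dots> = kron (block dR (prep_state K p \<rho> dR) a0 b0) (block (dR ^ n) (prep_power n K p \<rho> dR) a' b')"
    by (simp add: first_round Suc.IH \<open>a' < K ^ n\<close> \<open>b' < K ^ n\<close>)
  also have "\<dots> = block (dR ^ Suc n) (prep_power (Suc n) K p \<rho> dR) a b"
    by (simp only: block_prep_power_Suc[OF Suc.prems] a0_def b0_def a'_def b'_def)
  finally show ?case .
qed

lemma id_tensor_tensor_power_map_prep_power:
  assumes "channel dV dR \<Psi>" and "\<forall>k<K. \<xi> k \<in> carrier_mat dV dV" and "\<forall>k<K. \<rho> k = \<Psi> (\<xi> k)"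
  shows "id_tensor (K ^ n) (dV ^ n) (dR ^ n) (tensor_power_map n dV dR \<Psi>) (prep_power n K p \<xi> dV)
    = prep_power n K p \<rho> dR"
proof (rule id_tensor_eqI)
  show "prep_power n K p \<rho> dR \<in> carrier_mat (K ^ n * dR ^ n) (K ^ n * dR ^ n)"
    by (simp add: prep_power_def power_mult_distrib[symmetric])
qed (rule tensor_power_map_block_prep_power[OF assms])

lemma secret_of_source_channel:
  assumes virtual: "secret n K p \<xi> dV dB dOut \<E> \<E>ideal \<epsilon>"
    and T: "channel (dV ^ n) (dR ^ n) T"
    and source: "id_tensor (K ^ n) (dV ^ n) (dR ^ n) T (prep_power n K p \<xi> dV) = prep_power n K p \<rho> dR"
  shows "secret n K p \<rho> dR dB dOut \<E> \<E>ideal \<epsilon>"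
proof -
  have attack: "id_tensor (K ^ n) (dV ^ n) (dB * dE) (\<Phi> \<circ> T) (prep_power n K p \<xi> dV)
      = id_tensor (K ^ n) (dR ^ n) (dB * dE) \<Phi> (prep_power n K p \<rho> dR)"
    if "channel (dR ^ n) (dB * dE) \<Phi>" for dE \<Phi>
    using id_tensor_comp[OF channel_carrier[OF T] channel_carrier[OF that]] by (simp add: source)
  from virtual show ?thesis
    unfolding secret_def Let_def prep_power_def[symmetric] by (metis attack channel_comp[OF T])
qed

theorem lemma8:
  fixes n K dR dV dB dOut :: nat
    and p :: "nat \<Rightarrow> real"
    and \<rho> \<xi> :: "nat \<Rightarrow> complex mat"
    and \<Psi> \<E> \<E>ideal :: "complex mat \<Rightarrow> complex mat"
    and \<epsilon>sec :: real
  assumes p_nonneg: "\<forall>k<K. 0 \<le> p k"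
    and p_sum: "(\<Sum>k<K. p k) = 1"
    and rho_states: "\<forall>k<K. density dR (\<rho> k)"
    and xi_states: "\<forall>k<K. density dV (\<xi> k)"
    and E_channel: "channel (K ^ n * dB) dOut \<E>"
    and Eideal_channel: "channel (K ^ n * dB) dOut \<E>ideal"
    and source_map: "channel dV dR \<Psi>"
    and source_rel: "\<forall>k<K. \<rho> k = \<Psi> (\<xi> k)"
    and virtual_secret: "secret n K p \<xi> dV dB dOut \<E> \<E>ideal \<epsilon>sec"
  shows "secret n K p \<rho> dR dB dOut \<E> \<E>ideal \<epsilon>sec"
proof -
  (* Only the dimensions of the \<xi> k matter: the transfer holds for arbitrary weights p
     and arbitrary maps \<E>, \<E>ideal. *)
  have "\<forall>k<K. \<xi> k \<in> carrier_mat dV dV"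
    using xi_states by (simp add: density_def)
  then show ?thesis
    using secret_of_source_channel[OF virtual_secret channel_tensor_power_map[OF source_map]]
      id_tensor_tensor_power_map_prep_power[OF source_map _ source_rel]
    by blast
qed

end
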